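(* Let $(\mathbf{x}, y, a)$ be jointly distributed according to a distribution $P$ with $\mathbf{x}\in\mathbb{R}^d$, $y\in\mathcal{Y}=\{1,\ldots,L\}$ and $a\in\mathcal{A}$, where $|\mathcal{A}|=K$, and assume every group has positive prior, $P(y,a)>0$ for all $(y,a)\in\mathcal{Y}\times\mathcal{A}$. For a scoring function $f:\mathbb{R}^d\to\mathbb{R}^L$ define its group-balanced accuracy $$GBA(f)=\frac{1}{KL}\sum_{(y_0,a_0)\in\mathcal{Y}\times\mathcal{A}} P\Big(y=\arg\max_{y'\in\mathcal{Y}} f_{y'}(\mathbf{x}) \,\Big|\, (y,a)=(y_0,a_0)\Big).$$ Then the classifier that assigns to each input $\mathbf{x}$ the prediction $$\arg\max_{y\in\mathcal{Y}}\sum_{a\in\mathcal{A}}\frac{P(y,a\mid\mathbf{x})}{P(y,a)} \;=\; \arg\max_{y\in\mathcal{Y}}\sum_{a\in\mathcal{A}}\frac{P(y\mid a,\mathbf{x})\,P(a\mid\mathbf{x})}{P(y,a)}$$ maximizes $GBA$; i.e. any $f^\ast$ with $\arg\max_{y}f^\ast_y(\mathbf{x})$ equal to this prediction for every $\mathbf{x}$ satisfies $f^\ast\in\arg\max_f GBA(f)$.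
   Context: $\mathcal{A}$ is the set of values of a (spurious) attribute; a group is a pair $g=(y,a)\in\mathcal{Y}\times\mathcal{A}$. $P(y,a)$ denotes the prior probability of group $(y,a)$ and $P(y,a\mid\mathbf{x})$ the true posterior probability of group $(y,a)$ given $\mathbf{x}$; $P(y\mid a,\mathbf{x})$ and $P(a\mid\mathbf{x})$ are the corresponding conditional probabilities under $P$. *)

theory Defs
  imports "HOL-Probability.Probability"
begin

text \<open>Samples are triples (x, (y, a)) with x :: real^'d, label y :: 'y, attribute a :: 'a.
  A scoring function is f :: real^'d => 'y => real (f x y = f_y(x)).\<close>

text \<open>Prediction argmax_y f_y(x); ties are broken by a fixed (choice-based) rule that
  depends only on the set of maximisers.\<close>
definition pred :: "('x \<Rightarrow> 'y \<Rightarrow> real) \<Rightarrow> 'x \<Rightarrow> 'y" where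
  "pred f x = (SOME y. \<forall>y'. f x y' \<le> f x y)"

definition cond_prob :: "'z measure \<Rightarrow> 'z set \<Rightarrow> 'z set \<Rightarrow> real" where
  "cond_prob M A B = measure M (A \<inter> B) / measure M B"

definition group_prior :: "('x \<times> ('y \<times> 'a)) measure \<Rightarrow> 'y \<Rightarrow> 'a \<Rightarrow> real" where
  "group_prior M y a = measure M {z \<in> space M. snd z = (y, a)}"

definition GBA :: "('x \<times> ('y::finite \<times> 'a::finite)) measure \<Rightarrow> ('x \<Rightarrow> 'y \<Rightarrow> real) \<Rightarrow> real" where
  "GBA M f = (1 / (real CARD('a) * real CARD('y))) *
     (\<Sum>(y0, a0) \<in> (UNIV :: ('y \<times> 'a) set).
        cond_prob M {z \<in> space M. pred f (fst z) = fst (snd z)}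
                    {z \<in> space M. snd z = (y0, a0)})"

text \<open>The score sum_a P(y,a|x)/P(y,a), given the posterior eta x y a = P(y,a|x).\<close>
definition bayes_score :: "('x \<times> ('y \<times> 'a::finite)) measure \<Rightarrow> ('x \<Rightarrow> 'y \<Rightarrow> 'a \<Rightarrow> real)
    \<Rightarrow> 'x \<Rightarrow> 'y \<Rightarrow> real" where
  "bayes_score M \<eta> x y = (\<Sum>a\<in>UNIV. \<eta> x y a / group_prior M y a)"

end

theory Submission
  imports Defs
begin

text \<open>Write \<open>\<nu>\<close> for the law of \<open>x\<close> and \<open>s(x, y) = \<Sum>\<^sub>a \<eta>(x,y,a) / P(y,a)\<close>.
  Through the density \<open>\<eta>\<close>, the accuracy of a classifier \<open>g\<close> on group \<open>(y, a)\<close> is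
  \<open>\<integral> 1[g x = y] \<eta>(x,y,a) / P(y,a) d\<nu>\<close>; summing over all groups gives
  \<open>KL \<cdot> GBA = \<integral> s(x, g x) d\<nu>\<close>. The integrand is maximised pointwise by predicting a
  maximiser of \<open>s(x, \<cdot>)\<close>, which is exactly what \<open>f\<^sup>*\<close> does.\<close>

lemma measurable_pred:
  fixes f :: "'x \<Rightarrow> 'y::finite \<Rightarrow> real"
  assumes "\<And>y. (\<lambda>x. f x y) \<in> borel_measurable N"
  shows "pred f \<in> measurable N (count_space UNIV)"
proof -
  \<comment> \<open>\<open>pred f x\<close> is a fixed choice from the argmax set, which ranges over a finite type.\<close>
  have "(\<lambda>x. {y. \<forall>y'. f x y' \<le> f x y}) \<in> measurable N (count_space UNIV)"
  proof (subst measurable_count_space_eq2_countable, safe)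
    fix T :: "'y set"
    have "Measurable.pred N (\<lambda>x. \<forall>y. (\<forall>y'. f x y' \<le> f x y) \<longleftrightarrow> y \<in> T)"
      using assms by measurable
    then show "(\<lambda>x. {y. \<forall>y'. f x y' \<le> f x y}) -` {T} \<inter> space N \<in> sets N"
      by (simp add: Measurable.pred_def vimage_def set_eq_iff Int_def conj_commute)
  qed auto
  then have "(\<lambda>x. SOME y. y \<in> {y. \<forall>y'. f x y' \<le> f x y}) \<in> measurable N (count_space UNIV)"
    by (rule measurable_compose_countable[where f="\<lambda>T x. SOME y. y \<in> T", rotated]) simp
  then show ?thesis
    by (simp add: pred_def[abs_def])
qed

lemma bayes_score_eq_sum_groups:
  fixes g :: "'x \<Rightarrow> 'y::finite"
  shows "bayes_score M \<eta> x (g x) =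
    (\<Sum>(y, a)\<in>UNIV. indicator {x. g x = y} x * \<eta> x y a / group_prior M y a)"
proof -
  have "(\<Sum>(y, a)\<in>UNIV. indicator {x. g x = y} x * \<eta> x y a / group_prior M y a) =
        (\<Sum>y\<in>UNIV. indicator {x. g x = y} x * bayes_score M \<eta> x y)"
    by (simp add: bayes_score_def sum_distrib_left sum.cartesian_product
        UNIV_Times_UNIV[symmetric] del: UNIV_Times_UNIV)
  also have "\<dots> = bayes_score M \<eta> x (g x)"
    by (simp add: indicator_def singleton_conv)
  finally show ?thesis ..
qed

lemma cond_prob_correct_in_group:
  fixes M :: "('x \<times> ('y \<times> 'a)) measure"
  assumes sets_M: "sets M = sets (X \<Otimes>\<^sub>M count_space UNIV)"
    and density: "\<forall>B \<in> sets X. measure M (B \<times> {(y, a)}) = (LINT x:B|distr M X fst. \<eta> x y a)"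
    and g: "g \<in> measurable X (count_space UNIV)"
  shows "cond_prob M {z \<in> space M. g (fst z) = fst (snd z)} {z \<in> space M. snd z = (y, a)} =
         (\<integral>x. indicator {x. g x = y} x * \<eta> x y a / group_prior M y a \<partial>distr M X fst)"
proof -
  have space_M: "space M = space X \<times> UNIV"
    using sets_eq_imp_space_eq[OF sets_M] by (simp add: space_pair_measure)
  have "{z \<in> space M. g (fst z) = fst (snd z)} \<inter> {z \<in> space M. snd z = (y, a)} =
        (g -` {y} \<inter> space X) \<times> {(y, a)}"
    by (auto simp: space_M)
  moreover have "g -` {y} \<inter> space X \<in> sets X"
    using g by measurable
  ultimately have "measure M ({z \<in> space M. g (fst z) = fst (snd z)} \<inter>
                             {z \<in> space M. snd z = (y, a)}) =
      (LINT x:g -` {y} \<inter> space X|distr M X fst. \<eta> x y a)"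
    using density by simp
  also have "\<dots> = (\<integral>x. indicator {x. g x = y} x * \<eta> x y a \<partial>distr M X fst)"
    unfolding set_lebesgue_integral_def real_scaleR_def
    by (rule Bochner_Integration.integral_cong) (auto simp: indicator_def)
  finally show ?thesis
    by (simp add: cond_prob_def group_prior_def)
qed

lemma sum_group_accuracies_eq_integral:
  fixes M :: "('x \<times> ('y::finite \<times> 'a::finite)) measure"
  assumes "prob_space M"
    and sets_M: "sets M = sets (X \<Otimes>\<^sub>M count_space UNIV)"
    and \<eta>_measurable: "\<forall>y a. (\<lambda>x. \<eta> x y a) \<in> borel_measurable X"
    and \<eta>_bounds: "\<forall>x y a. 0 \<le> \<eta> x y a \<and> \<eta> x y a \<le> 1"
    and density: "\<forall>y a. \<forall>B \<in> sets X.
           measure M (B \<times> {(y, a)}) = (LINT x:B|distr M X fst. \<eta> x y a)"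
    and g: "g \<in> measurable X (count_space UNIV)"
  shows "integrable (distr M X fst) (\<lambda>x. bayes_score M \<eta> x (g x))"
    and "(\<Sum>(y, a)\<in>UNIV. cond_prob M {z \<in> space M. g (fst z) = fst (snd z)}
                                     {z \<in> space M. snd z = (y, a)}) =
         (\<integral>x. bayes_score M \<eta> x (g x) \<partial>distr M X fst)" (is "?accuracies = _")
proof -
  interpret M: prob_space M by fact
  let ?\<nu> = "distr M X fst"
  have "fst \<in> measurable M X"
    unfolding measurable_cong_sets[OF sets_M refl] by simp
  then interpret \<nu>: prob_space ?\<nu>
    by (rule M.prob_space_distr)
  define h where "h y a = (\<lambda>x. indicator {x. g x = y} x * \<eta> x y a / group_prior M y a)" for y a
  have h_integrable: "integrable ?\<nu> (h y a)" for y a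
  proof (rule \<nu>.integrable_const_bound[where B="1 / group_prior M y a"])
    show "AE x in ?\<nu>. norm (h y a x) \<le> 1 / group_prior M y a"
      using \<eta>_bounds by (auto simp: h_def indicator_def group_prior_def divide_right_mono)
    have "(\<lambda>x. \<eta> x y a) \<in> borel_measurable X"
      using \<eta>_measurable by simp
    then show "h y a \<in> borel_measurable ?\<nu>"
      unfolding h_def using g by measurable
  qed
  have bayes_score_eq: "(\<lambda>x. bayes_score M \<eta> x (g x)) = (\<lambda>x. \<Sum>(y, a)\<in>UNIV. h y a x)"
    by (simp add: h_def bayes_score_eq_sum_groups)
  show "integrable ?\<nu> (\<lambda>x. bayes_score M \<eta> x (g x))"
    unfolding bayes_score_eq case_prod_beta using h_integrable by simp
  have group_accuracy: "cond_prob M {z \<in> space M. g (fst z) = fst (snd z)}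
                                  {z \<in> space M. snd z = (y, a)} = integral\<^sup>L ?\<nu> (h y a)" for y a
    unfolding h_def using density by (intro cond_prob_correct_in_group[OF sets_M _ g]) simp
  have "?accuracies = (\<Sum>(y, a)\<in>UNIV. integral\<^sup>L ?\<nu> (h y a))"
    by (rule sum.cong) (auto simp only: group_accuracy)
  also have "\<dots> = (\<integral>x. (\<Sum>(y, a)\<in>UNIV. h y a x) \<partial>?\<nu>)"
    unfolding case_prod_beta using h_integrable by simp
  finally show "?accuracies = (\<integral>x. bayes_score M \<eta> x (g x) \<partial>?\<nu>)"
    unfolding bayes_score_eq .
qed

theorem proposition1:
  fixes M :: "((real ^ 'd) \<times> ('y::finite \<times> 'a::finite)) measure"
    and \<eta> :: "real ^ 'd \<Rightarrow> 'y \<Rightarrow> 'a \<Rightarrow> real"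
    and fstar :: "real ^ 'd \<Rightarrow> 'y \<Rightarrow> real"
  assumes "prob_space M"
    and "sets M = sets (borel \<Otimes>\<^sub>M count_space UNIV)"
    and "\<forall>y a. group_prior M y a > 0"
    and "\<forall>y a. (\<lambda>x. \<eta> x y a) \<in> borel_measurable borel"
    and "\<forall>x y a. \<eta> x y a \<ge> 0"
    and "\<forall>x. (\<Sum>(y, a)\<in>UNIV. \<eta> x y a) = 1"
    and "\<forall>y a. \<forall>B \<in> sets borel.
           measure M (B \<times> {(y, a)}) = (LINT x:B|distr M borel fst. \<eta> x y a)"
    and "\<forall>y. (\<lambda>x. fstar x y) \<in> borel_measurable borel"
    and "\<forall>x y. bayes_score M \<eta> x y \<le> bayes_score M \<eta> x (pred fstar x)"
  shows "\<forall>f :: real ^ 'd \<Rightarrow> 'y \<Rightarrow> real.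
           (\<forall>y. (\<lambda>x. f x y) \<in> borel_measurable borel) \<longrightarrow> GBA M f \<le> GBA M fstar"
proof (intro allI impI)
  fix f :: "real ^ 'd \<Rightarrow> 'y \<Rightarrow> real"
  assume "\<forall>y. (\<lambda>x. f x y) \<in> borel_measurable borel"
  then have pred_f: "pred f \<in> measurable borel (count_space UNIV)"
    by (intro measurable_pred) simp
  have pred_fstar: "pred fstar \<in> measurable borel (count_space UNIV)"
    using assms(8) by (intro measurable_pred) simp
  have "\<eta> x y a \<le> 1" for x y a
    using member_le_sum[of "(y, a)" UNIV "\<lambda>(y, a). \<eta> x y a"] assms(5,6) by auto
  with assms(5) have "\<forall>x y a. 0 \<le> \<eta> x y a \<and> \<eta> x y a \<le> 1"
    by simp
  note accuracy = sum_group_accuracies_eq_integral[OF assms(1,2,4) this assms(7)]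
  have "(\<integral>x. bayes_score M \<eta> x (pred f x) \<partial>distr M borel fst) \<le>
        (\<integral>x. bayes_score M \<eta> x (pred fstar x) \<partial>distr M borel fst)"
    using accuracy(1)[OF pred_f] accuracy(1)[OF pred_fstar] assms(9) by (intro integral_mono) auto
  then show "GBA M f \<le> GBA M fstar"
    unfolding GBA_def accuracy(2)[OF pred_f] accuracy(2)[OF pred_fstar]
    by (simp add: divide_right_mono)
qed

end
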